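(* Let $N$ be a natural number, and let $\mathcal{T}_N$ be the class of all finite digraphs $D$ whose vertex set can be written as a disjoint union $D_e\cup D_c\cup D_f$ such that: (i) the digraph induced on $D_e$ is empty, and is either reflexive or irreflexive; (ii) the digraph induced on $D_c$ is complete and reflexive (every ordered pair $(x,y)$ with $x,y\in D_c$, including $x=y$, is an edge); (iii) $|D_f|\le N$; (iv) the connections between $D_e$ and $D_c$ are uniform: for all $x,y\in D_e$ and all $z,t\in D_c$ we have $(x,z)\in E(D)\Leftrightarrow (y,t)\in E(D)$ and $(z,x)\in E(D)\Leftrightarrow (t,y)\in E(D)$. Then $\mathcal{T}_N$ is well quasi-ordered under both the (standard) homomorphic image ordering and the strong homomorphic image ordering.
   Context: A digraph is a set $D$ with a binary relation $E(D)\subseteq D\times D$ (pairs in $E(D)$ are edges; loops $(x,x)$ are allowed). A digraph is reflexive if all loops $(x,x)$ are edges, irreflexive if none are; it is empty if there is no edge $(x,y)$ with $x\neq y$. A map $\phi:D_1\to D_2$ is a homomorphism if $(x,y)\in E(D_1)$ implies $(\phi(x),\phi(y))\in E(D_2)$; it is strong if moreover $\{(\phi(x),\phi(y)):(x,y)\in E(D_1)\}$ equals $E(D_2)\cap(\phi(D_1)\times\phi(D_1))$. An epimorphism is a surjective homomorphism. The (standard) homomorphic image ordering is: $A\preceq B$ iff there is an epimorphism $B\to A$; the strong homomorphic image ordering: $A\preceq B$ iff there is a strong epimorphism $B\to A$. A class is well quasi-ordered (wqo) if it contains no infinite strictly decreasing sequence and no infinite antichain (set of pairwise incomparable elements); structures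 are considered up to isomorphism. *)

theory Defs
  imports Main
begin

text \<open>A (finite) digraph is represented by a vertex set V and an edge relation E
  with E a subset of V x V. Vertices are natural numbers (every finite digraph is
  isomorphic to one of this form).\<close>

type_synonym dgraph = "nat set \<times> (nat \<times> nat) set"

definition finite_digraph :: "dgraph \<Rightarrow> bool" where
  "finite_digraph D \<longleftrightarrow> finite (fst D) \<and> snd D \<subseteq> fst D \<times> fst D"

definition is_hom :: "dgraph \<Rightarrow> dgraph \<Rightarrow> (nat \<Rightarrow> nat) \<Rightarrow> bool" where
  "is_hom D1 D2 \<phi> \<longleftrightarrow> \<phi> ` fst D1 \<subseteq> fst D2 \<and>
     (\<forall>x y. (x, y) \<in> snd D1 \<longrightarrow> (\<phi> x, \<phi> y) \<in> snd D2)"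

definition is_strong_hom :: "dgraph \<Rightarrow> dgraph \<Rightarrow> (nat \<Rightarrow> nat) \<Rightarrow> bool" where
  "is_strong_hom D1 D2 \<phi> \<longleftrightarrow> is_hom D1 D2 \<phi> \<and>
     {(\<phi> x, \<phi> y) | x y. (x, y) \<in> snd D1} = snd D2 \<inter> (\<phi> ` fst D1 \<times> \<phi> ` fst D1)"

definition is_epi :: "dgraph \<Rightarrow> dgraph \<Rightarrow> (nat \<Rightarrow> nat) \<Rightarrow> bool" where
  "is_epi D1 D2 \<phi> \<longleftrightarrow> is_hom D1 D2 \<phi> \<and> \<phi> ` fst D1 = fst D2"

definition hom_img_le :: "dgraph \<Rightarrow> dgraph \<Rightarrow> bool" where
  "hom_img_le A B \<longleftrightarrow> (\<exists>\<phi>. is_epi B A \<phi>)"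

definition strong_hom_img_le :: "dgraph \<Rightarrow> dgraph \<Rightarrow> bool" where
  "strong_hom_img_le A B \<longleftrightarrow> (\<exists>\<phi>. is_epi B A \<phi> \<and> is_strong_hom B A \<phi>)"

definition wqo_class :: "'b set \<Rightarrow> ('b \<Rightarrow> 'b \<Rightarrow> bool) \<Rightarrow> bool" where
  "wqo_class C le \<longleftrightarrow>
     \<not> (\<exists>f::nat \<Rightarrow> 'b. (\<forall>n. f n \<in> C) \<and> (\<forall>n. le (f (Suc n)) (f n) \<and> \<not> le (f n) (f (Suc n)))) \<and>
     \<not> (\<exists>f::nat \<Rightarrow> 'b. (\<forall>n. f n \<in> C) \<and> (\<forall>i j. i \<noteq> j \<longrightarrow> \<not> le (f i) (f j)))"

definition class_T :: "nat \<Rightarrow> dgraph set" where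
  "class_T N = {D. finite_digraph D \<and>
     (\<exists>De Dc Df. De \<union> Dc \<union> Df = fst D \<and> De \<inter> Dc = {} \<and> De \<inter> Df = {} \<and> Dc \<inter> Df = {} \<and>
        (\<forall>x\<in>De. \<forall>y\<in>De. x \<noteq> y \<longrightarrow> (x, y) \<notin> snd D) \<and>
        ((\<forall>x\<in>De. (x, x) \<in> snd D) \<or> (\<forall>x\<in>De. (x, x) \<notin> snd D)) \<and>
        (\<forall>x\<in>Dc. \<forall>y\<in>Dc. (x, y) \<in> snd D) \<and>
        card Df \<le> N \<and>
        (\<forall>x\<in>De. \<forall>y\<in>De. \<forall>z\<in>Dc. \<forall>t\<in>Dc.
            ((x, z) \<in> snd D \<longleftrightarrow> (y, t) \<in> snd D) \<and> ((z, x) \<in> snd D \<longleftrightarrow> (t, y) \<in> snd D)))}"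

end

theory Submission
  imports Defs "HOL-Library.Equipollence" "HOL-Library.Ramsey"
begin

text \<open>
  Descending chains: an epimorphism \<open>B \<rightarrow> A\<close> has \<open>|V A| \<le> |V B|\<close>; if the vertex counts
  agree it is a bijection that can only add edges, and if it adds none its inverse is a strong
  epimorphism \<open>A \<rightarrow> B\<close>. So along a strictly descending chain, for either ordering, the pair
  \<open>(|V|, -|E|)\<close> decreases lexicographically.

  Antichains: rename \<open>D\<^sub>f\<close> into \<open>{..<N}\<close> and give every other vertex the type consisting of
  its part (\<open>D\<^sub>e\<close> or \<open>D\<^sub>c\<close>) and its out- and in-neighbourhoods in \<open>D\<^sub>f\<close>. Whether there is an
  edge between two vertices is then decided by their types, whether they are equal, and a
  finite amount of global data. There are finitely many types, so by Ramsey's theorem any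
  infinite sequence in \<open>T\<^sub>N\<close> contains \<open>i < j\<close> with the same global data, the same absent types,
  and at least as many vertices of each type in the \<open>j\<close>-th digraph; a type-preserving
  surjection from the \<open>j\<close>-th onto the \<open>i\<close>-th digraph is then a strong epimorphism.
\<close>

lemma strong_hom_img_le_imp_hom_img_le: "strong_hom_img_le A B \<Longrightarrow> hom_img_le A B"
  unfolding strong_hom_img_le_def hom_img_le_def by blast

lemma card_vertices_le_if_epi:
  assumes "finite_digraph B" "is_epi B A \<phi>"
  shows "card (fst A) \<le> card (fst B)"
  using assms card_image_le unfolding is_epi_def finite_digraph_def by metis

lemma strong_hom_img_le_inverse:
  assumes epi: "is_epi B A \<phi>" and B: "finite_digraph B"
    and inj: "inj_on \<phi> (fst B)" and edges: "map_prod \<phi> \<phi> ` snd B = snd A"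
  shows "strong_hom_img_le B A"
proof -
  define \<psi> where "\<psi> = inv_into (fst B) \<phi>"
  have EB: "snd B \<subseteq> fst B \<times> fst B" using B by (simp add: finite_digraph_def)
  have \<psi>\<phi>: "\<psi> (\<phi> x) = x" if "x \<in> fst B" for x using inj that by (simp add: \<psi>_def)
  have "\<psi> ` fst A = \<psi> ` \<phi> ` fst B"
    using epi by (simp add: is_epi_def)
  also have "\<dots> = fst B"
    using \<psi>\<phi> by (simp add: image_image)
  finally have vertices: "\<psi> ` fst A = fst B" .
  have "{(\<psi> a, \<psi> b) | a b. (a, b) \<in> snd A} = map_prod \<psi> \<psi> ` map_prod \<phi> \<phi> ` snd B"
    unfolding edges by auto
  also have "\<dots> = snd B"
  proof -
    have "map_prod \<psi> \<psi> (map_prod \<phi> \<phi> p) = p" if "p \<in> snd B" for p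
      using that EB \<psi>\<phi> by (cases p) auto
    then show ?thesis by (simp add: image_image)
  qed
  finally have edges_\<psi>: "{(\<psi> a, \<psi> b) | a b. (a, b) \<in> snd A} = snd B" .
  then have "is_epi A B \<psi>"
    using vertices unfolding is_epi_def is_hom_def by blast
  moreover have "is_strong_hom A B \<psi>"
    using calculation edges_\<psi> vertices EB unfolding is_epi_def is_strong_hom_def by auto
  ultimately show ?thesis
    unfolding strong_hom_img_le_def by blast
qed

lemma card_lex_less_if_strict_epi:
  assumes A: "finite_digraph A" and B: "finite_digraph B"
    and epi: "is_epi B A \<phi>" and not_back: "\<not> strong_hom_img_le B A"
  shows "card (fst A) < card (fst B) \<or> card (fst A) = card (fst B) \<and> card (snd B) < card (snd A)"
proof (cases "card (fst A) = card (fst B)")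
  case True
  have VB: "finite (fst B)" and EB: "snd B \<subseteq> fst B \<times> fst B"
    using B by (auto simp: finite_digraph_def)
  have EA: "finite (snd A)"
    using A unfolding finite_digraph_def by (meson finite_SigmaI finite_subset)
  have "card (\<phi> ` fst B) = card (fst B)"
    using epi True by (simp add: is_epi_def)
  then have inj: "inj_on \<phi> (fst B)"
    by (rule eq_card_imp_inj_on[OF VB])
  then have "inj_on (map_prod \<phi> \<phi>) (snd B)"
    using EB map_prod_inj_on inj_on_subset by blast
  moreover have sub: "map_prod \<phi> \<phi> ` snd B \<subseteq> snd A"
    using epi by (auto simp: is_epi_def is_hom_def)
  ultimately have "card (snd B) \<le> card (snd A)"
    using EA card_inj_on_le by blast
  moreover have "map_prod \<phi> \<phi> ` snd B \<noteq> snd A"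
    using strong_hom_img_le_inverse[OF epi B inj] not_back by blast
  then have "card (snd B) \<noteq> card (snd A)"
    using card_subset_eq[OF EA sub] card_image[OF \<open>inj_on (map_prod \<phi> \<phi>) (snd B)\<close>] by auto
  ultimately show ?thesis using True by simp
next
  case False
  then show ?thesis using card_vertices_le_if_epi[OF B epi] by simp
qed

lemma no_infinite_strict_epi_chain:
  assumes fin: "\<And>n. finite_digraph (f n)"
    and step: "\<And>n. hom_img_le (f (Suc n)) (f n) \<and> \<not> strong_hom_img_le (f n) (f (Suc n))"
  shows False
proof -
  define v where "v n = card (fst (f n))" for n
  define e where "e n = card (snd (f n))" for n
  have decr: "v (Suc n) < v n \<or> v (Suc n) = v n \<and> e n < e (Suc n)" for n
    using step[of n] card_lex_less_if_strict_epi[OF fin fin] unfolding hom_img_le_def v_def e_def by blast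
  have v_le: "v n \<le> v 0" for n
  proof (induction n)
    case (Suc n)
    then show ?case using decr[of n] by linarith
  qed simp
  have e_le: "e n \<le> v 0 * v 0" for n
  proof -
    have "snd (f n) \<subseteq> fst (f n) \<times> fst (f n)" "finite (fst (f n) \<times> fst (f n))"
      using fin[of n] unfolding finite_digraph_def by auto
    then have "e n \<le> v n * v n"
      unfolding e_def v_def by (metis card_mono card_cartesian_product)
    also have "\<dots> \<le> v 0 * v 0" using v_le[of n] by (simp add: mult_le_mono)
    finally show ?thesis .
  qed
  define \<mu> where "\<mu> n = (v n, v 0 * v 0 - e n)" for n
  have "(\<mu> (Suc n), \<mu> n) \<in> less_than <*lex*> less_than" for n
    using decr[of n] e_le[of "Suc n"] unfolding \<mu>_def by auto
  then have "\<forall>n. (\<mu> (Suc n), \<mu> n) \<in> less_than <*lex*> less_than" ..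
  then show False
    using wf_lex_prod[OF wf_less_than wf_less_than] unfolding wf_iff_no_infinite_down_chain by blast
qed

lemma ex_surj_if_card_le:
  assumes "finite X" "finite Y" "card Y \<le> card X" "Y \<noteq> {}"
  shows "\<exists>\<sigma>. \<sigma> ` X = Y"
proof -
  obtain g where g: "Y \<subseteq> g ` X"
    using assms(1-3) lepoll_iff lepoll_iff_card_le by metis
  obtain y0 where "y0 \<in> Y" using assms(4) by blast
  then have "(\<lambda>x. if g x \<in> Y then g x else y0) ` X = Y" using g by auto
  then show ?thesis by blast
qed

lemma ex_label_preserving_surj:
  assumes "finite X" "finite Y"
    and card_le: "\<And>k. card {y\<in>Y. \<kappa>Y y = k} \<le> card {x\<in>X. \<kappa>X x = k}"
    and nonempty: "\<And>k. {y\<in>Y. \<kappa>Y y = k} = {} \<Longrightarrow> {x\<in>X. \<kappa>X x = k} = {}"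
  obtains \<phi> where "\<phi> ` X = Y" "\<And>x. x \<in> X \<Longrightarrow> \<kappa>Y (\<phi> x) = \<kappa>X x"
proof -
  have "\<exists>\<sigma>. \<sigma> ` {x\<in>X. \<kappa>X x = k} = {y\<in>Y. \<kappa>Y y = k}" for k
  proof (cases "{y\<in>Y. \<kappa>Y y = k} = {}")
    case True
    then show ?thesis using nonempty[of k] by (metis image_empty)
  next
    case False
    then show ?thesis
      using ex_surj_if_card_le[of "{x\<in>X. \<kappa>X x = k}" "{y\<in>Y. \<kappa>Y y = k}"] card_le[of k] assms(1,2)
      by simp
  qed
  then have "\<exists>\<sigma>. \<forall>k. \<sigma> k ` {x\<in>X. \<kappa>X x = k} = {y\<in>Y. \<kappa>Y y = k}"
    by (intro choice allI)
  then obtain \<sigma> where \<sigma>: "\<And>k. \<sigma> k ` {x\<in>X. \<kappa>X x = k} = {y\<in>Y. \<kappa>Y y = k}"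
    by blast
  define \<phi> where "\<phi> x = \<sigma> (\<kappa>X x) x" for x
  have "\<phi> x \<in> {y\<in>Y. \<kappa>Y y = \<kappa>X x}" if "x \<in> X" for x
  proof -
    have "\<phi> x \<in> \<sigma> (\<kappa>X x) ` {x'\<in>X. \<kappa>X x' = \<kappa>X x}"
      using that unfolding \<phi>_def by simp
    then show ?thesis unfolding \<sigma> .
  qed
  moreover have "Y \<subseteq> \<phi> ` X"
  proof
    fix y assume "y \<in> Y"
    then have "y \<in> \<sigma> (\<kappa>Y y) ` {x\<in>X. \<kappa>X x = \<kappa>Y y}" unfolding \<sigma> by simp
    then obtain x where "x \<in> X" "\<kappa>X x = \<kappa>Y y" "y = \<sigma> (\<kappa>Y y) x" by auto
    then have "\<phi> x = y" unfolding \<phi>_def by simp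
    then show "y \<in> \<phi> ` X" using \<open>x \<in> X\<close> by blast
  qed
  ultimately show ?thesis using that by blast
qed

definition edges_determined_by ::
    "dgraph \<Rightarrow> ('k \<Rightarrow> 'k \<Rightarrow> bool \<Rightarrow> bool) \<Rightarrow> (nat \<Rightarrow> 'k) \<Rightarrow> bool" where
  "edges_determined_by D F \<kappa> \<longleftrightarrow>
     (\<forall>u\<in>fst D. \<forall>v\<in>fst D. (u, v) \<in> snd D \<longleftrightarrow> F (\<kappa> u) (\<kappa> v) (u = v))"

lemma strong_hom_img_le_if_label_preserving:
  assumes A: "finite_digraph A" and B: "finite_digraph B"
    and FA: "edges_determined_by A F \<kappa>A" and FB: "edges_determined_by B F \<kappa>B"
    and F_mono: "\<And>k l. F k l False \<Longrightarrow> F k l True"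
    and onto: "\<phi> ` fst B = fst A" and label: "\<And>x. x \<in> fst B \<Longrightarrow> \<kappa>A (\<phi> x) = \<kappa>B x"
  shows "strong_hom_img_le A B"
proof -
  have EA: "snd A \<subseteq> fst A \<times> fst A" and EB: "snd B \<subseteq> fst B \<times> fst B"
    using A B by (auto simp: finite_digraph_def)
  have edge_B: "(x, y) \<in> snd B \<longleftrightarrow> F (\<kappa>B x) (\<kappa>B y) (x = y)"
    if "x \<in> fst B" "y \<in> fst B" for x y
    using FB that unfolding edges_determined_by_def by blast
  have edge_A: "(\<phi> x, \<phi> y) \<in> snd A \<longleftrightarrow> F (\<kappa>B x) (\<kappa>B y) (\<phi> x = \<phi> y)"
    if "x \<in> fst B" "y \<in> fst B" for x y
  proof -
    have "\<phi> x \<in> fst A" "\<phi> y \<in> fst A" using onto that by auto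
    then show ?thesis using FA label that unfolding edges_determined_by_def by simp
  qed
  have hom: "(\<phi> x, \<phi> y) \<in> snd A" if "(x, y) \<in> snd B" for x y
  proof -
    have xy: "x \<in> fst B" "y \<in> fst B" using that EB by auto
    then have "F (\<kappa>B x) (\<kappa>B y) (x = y)" using edge_B that by blast
    then have "F (\<kappa>B x) (\<kappa>B y) (\<phi> x = \<phi> y)" using F_mono by (cases "x = y"; cases "\<phi> x = \<phi> y") auto
    then show ?thesis using edge_A xy by blast
  qed
  have "snd A \<subseteq> {(\<phi> x, \<phi> y) | x y. (x, y) \<in> snd B}"
  proof
    fix p assume p: "p \<in> snd A"
    obtain a b where ab: "p = (a, b)" by (cases p)
    have "a \<in> fst A" "b \<in> fst A" using p EA ab by auto
    then obtain x where x: "x \<in> fst B" "\<phi> x = a" using onto by (metis imageE)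
    \<comment> \<open>for a loop take the same preimage twice, so that the equality flag is preserved\<close>
    obtain y where y: "y \<in> fst B" "\<phi> y = b" "a = b \<Longrightarrow> y = x"
      using \<open>b \<in> fst A\<close> onto x by (cases "a = b") (auto, metis imageE)
    have "(\<phi> x = \<phi> y) = (x = y)" using x y by auto
    then have "(x, y) \<in> snd B"
      using edge_A[OF x(1) y(1)] edge_B[OF x(1) y(1)] p ab x(2) y(2) by simp
    then show "p \<in> {(\<phi> x, \<phi> y) | x y. (x, y) \<in> snd B}" using ab x y by blast
  qed
  moreover have "{(\<phi> x, \<phi> y) | x y. (x, y) \<in> snd B} \<subseteq> snd A"
    using hom by blast
  ultimately have "{(\<phi> x, \<phi> y) | x y. (x, y) \<in> snd B} = snd A"
    by (rule equalityI[rotated])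
  also have "\<dots> = snd A \<inter> (\<phi> ` fst B \<times> \<phi> ` fst B)"
    using EA onto by blast
  finally have strong: "{(\<phi> x, \<phi> y) | x y. (x, y) \<in> snd B} = snd A \<inter> (\<phi> ` fst B \<times> \<phi> ` fst B)" .
  have "is_hom B A \<phi>"
    using hom onto unfolding is_hom_def by auto
  then show ?thesis
    unfolding strong_hom_img_le_def is_epi_def is_strong_hom_def
    using onto strong by (intro exI[of _ \<phi>] conjI) assumption+
qed

lemma ramsey_ordered_pairs:
  fixes c :: "nat \<Rightarrow> nat \<Rightarrow> 'c"
  assumes fin: "finite C" and colours: "\<And>i j. c i j \<in> C"
  obtains e :: "nat \<Rightarrow> nat" and \<gamma> where "strict_mono e" "\<And>m n. m < n \<Longrightarrow> c (e m) (e n) = \<gamma>"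
proof -
  obtain h where h: "bij_betw h C {0..<card C}"
    using ex_bij_betw_finite_nat[OF fin] by blast
  define f where "f X = h (c (Min X) (Max X))" for X
  have "h k < card C" if "k \<in> C" for k
    using bij_betwE[OF h] that by simp
  then have "\<forall>x\<in>UNIV. \<forall>y\<in>UNIV. x \<noteq> y \<longrightarrow> f {x, y} < card C"
    unfolding f_def by (simp add: colours)
  from Ramsey2[OF infinite_UNIV_nat this] obtain Y t
    where Y: "infinite Y" "\<forall>x\<in>Y. \<forall>y\<in>Y. x \<noteq> y \<longrightarrow> f {x, y} = t"
    by blast
  define e where "e = enumerate Y"
  have e: "strict_mono e" "\<And>n. e n \<in> Y"
    unfolding e_def using Y(1) by (simp_all add: strict_mono_enumerate enumerate_in_set)
  have "c (e m) (e n) = the_inv_into C h t" if "m < n" for m n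
  proof -
    have lt: "e m < e n" using e(1) that by (rule strict_monoD)
    then have "f {e m, e n} = t" using Y(2) e(2) by simp
    moreover have "Min {e m, e n} = e m" "Max {e m, e n} = e n" using lt by auto
    ultimately have "h (c (e m) (e n)) = t" unfolding f_def by simp
    then show ?thesis
      using h colours by (metis bij_betw_def the_inv_into_f_f)
  qed
  then show ?thesis by (rule that[OF e(1)])
qed

lemma ex_good_pair_pointwise_le:
  fixes d :: "nat \<Rightarrow> 'a" and f :: "nat \<Rightarrow> 'k \<Rightarrow> nat"
  assumes fin_d: "finite (range d)" and fin_K: "finite K"
  shows "\<exists>i j. i < j \<and> d i = d j \<and> (\<forall>t\<in>K. f i t \<le> f j t)"
proof -
  define c where "c i j = (d i = d j, {t\<in>K. f i t \<le> f j t})" for i j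
  have colours: "c i j \<in> UNIV \<times> Pow K" for i j unfolding c_def by auto
  have "finite (UNIV \<times> Pow K :: (bool \<times> 'k set) set)" using fin_K by simp
  then obtain e :: "nat \<Rightarrow> nat" and \<gamma> where e: "strict_mono e"
    and hom\<gamma>: "\<And>m n. m < n \<Longrightarrow> c (e m) (e n) = \<gamma>"
    using ramsey_ordered_pairs colours by blast
  obtain \<beta> S where hom: "\<And>m n. m < n \<Longrightarrow> c (e m) (e n) = (\<beta>, S)"
    using hom\<gamma> by (cases \<gamma>) blast
  have \<beta>
  proof (rule ccontr)
    assume "\<not> \<beta>"
    then have "d (e m) \<noteq> d (e n)" if "m \<noteq> n" for m n
      using hom[of m n] hom[of n m] that unfolding c_def by (cases "m < n") auto
    then have "inj (d \<circ> e)" by (metis comp_apply injI)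
    moreover have "range (d \<circ> e) \<subseteq> range d" by auto
    ultimately show False
      using fin_d finite_subset finite_imageD infinite_UNIV_nat by metis
  qed
  moreover have "S = K"
  proof (rule ccontr)
    assume "S \<noteq> K"
    moreover have "S \<subseteq> K" using hom[of 0 1] unfolding c_def by auto
    ultimately obtain t where t: "t \<in> K" "t \<notin> S" by blast
    define h where "h n = f (e n) t" for n
    have "h (Suc n) < h n" for n
      using hom[of n "Suc n"] t unfolding c_def h_def by auto
    then have "\<forall>n. (h (Suc n), h n) \<in> less_than" by simp
    then show False
      using wf_less_than unfolding wf_iff_no_infinite_down_chain by blast
  qed
  ultimately have "d (e 0) = d (e 1) \<and> (\<forall>t\<in>K. f (e 0) t \<le> f (e 1) t)"
    using hom[of 0 1] unfolding c_def by auto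
  moreover have "e 0 < e 1" using e by (simp add: strict_monoD)
  ultimately show ?thesis by blast
qed

datatype vertex_type =
  Finite_part nat | Empty_part "nat set \<times> nat set" | Complete_part "nat set \<times> nat set"

definition vertex_types :: "nat \<Rightarrow> vertex_type set" where
  "vertex_types N = Finite_part ` {..<N} \<union> Empty_part ` (Pow {..<N} \<times> Pow {..<N})
     \<union> Complete_part ` (Pow {..<N} \<times> Pow {..<N})"

lemma finite_vertex_types: "finite (vertex_types N)"
  unfolding vertex_types_def by simp

definition trace :: "dgraph \<Rightarrow> nat set \<Rightarrow> (nat \<Rightarrow> nat) \<Rightarrow> nat \<Rightarrow> nat set \<times> nat set" where
  "trace D Df b u = (b ` {w\<in>Df. (u, w) \<in> snd D}, b ` {w\<in>Df. (w, u) \<in> snd D})"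

definition vtype :: "dgraph \<Rightarrow> nat set \<Rightarrow> nat set \<Rightarrow> (nat \<Rightarrow> nat) \<Rightarrow> nat \<Rightarrow> vertex_type" where
  "vtype D De Df b u =
     (if u \<in> Df then Finite_part (b u)
      else if u \<in> De then Empty_part (trace D Df b u) else Complete_part (trace D Df b u))"

type_synonym digraph_shape = "(nat \<times> nat) set \<times> bool \<times> bool \<times> bool"

definition shape :: "dgraph \<Rightarrow> nat set \<Rightarrow> nat set \<Rightarrow> nat set \<Rightarrow> (nat \<Rightarrow> nat) \<Rightarrow> digraph_shape" where
  "shape D De Dc Df b =
     (map_prod b b ` (snd D \<inter> Df \<times> Df), \<forall>x\<in>De. (x, x) \<in> snd D,
      \<exists>x\<in>De. \<exists>z\<in>Dc. (x, z) \<in> snd D, \<exists>x\<in>De. \<exists>z\<in>Dc. (z, x) \<in> snd D)"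

fun edge_rule :: "digraph_shape \<Rightarrow> vertex_type \<Rightarrow> vertex_type \<Rightarrow> bool \<Rightarrow> bool" where
  "edge_rule (E, _, _, _) (Finite_part i) (Finite_part j) _ = ((i, j) \<in> E)"
| "edge_rule _ (Finite_part i) (Empty_part t) _ = (i \<in> snd t)"
| "edge_rule _ (Finite_part i) (Complete_part t) _ = (i \<in> snd t)"
| "edge_rule _ (Empty_part t) (Finite_part j) _ = (j \<in> fst t)"
| "edge_rule _ (Complete_part t) (Finite_part j) _ = (j \<in> fst t)"
| "edge_rule (_, loop, _, _) (Empty_part _) (Empty_part _) same = (same \<and> loop)"
| "edge_rule _ (Complete_part _) (Complete_part _) _ = True"
| "edge_rule (_, _, ec, _) (Empty_part _) (Complete_part _) _ = ec"
| "edge_rule (_, _, _, ce) (Complete_part _) (Empty_part _) _ = ce"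

lemma edge_rule_mono: "edge_rule s k l False \<Longrightarrow> edge_rule s k l True"
  by (cases s; cases k; cases l) auto

locale T_partition =
  fixes N :: nat and D :: dgraph and De Dc Df :: "nat set" and b :: "nat \<Rightarrow> nat"
  assumes digraph: "finite_digraph D"
    and cover: "De \<union> Dc \<union> Df = fst D"
    and disjoint: "De \<inter> Dc = {}" "De \<inter> Df = {}" "Dc \<inter> Df = {}"
    and empty_part: "\<And>x y. x \<in> De \<Longrightarrow> y \<in> De \<Longrightarrow> x \<noteq> y \<Longrightarrow> (x, y) \<notin> snd D"
    and loops: "(\<forall>x\<in>De. (x, x) \<in> snd D) \<or> (\<forall>x\<in>De. (x, x) \<notin> snd D)"
    and complete_part: "\<And>x y. x \<in> Dc \<Longrightarrow> y \<in> Dc \<Longrightarrow> (x, y) \<in> snd D"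
    and uniform_out: "\<And>x y z t. x \<in> De \<Longrightarrow> y \<in> De \<Longrightarrow> z \<in> Dc \<Longrightarrow> t \<in> Dc \<Longrightarrow>
      (x, z) \<in> snd D \<longleftrightarrow> (y, t) \<in> snd D"
    and uniform_in: "\<And>x y z t. x \<in> De \<Longrightarrow> y \<in> De \<Longrightarrow> z \<in> Dc \<Longrightarrow> t \<in> Dc \<Longrightarrow>
      (z, x) \<in> snd D \<longleftrightarrow> (t, y) \<in> snd D"
    and relabel_inj: "inj_on b Df" and relabel_range: "b ` Df \<subseteq> {..<N}"
begin

lemma trace_bounded: "trace D Df b u \<in> Pow {..<N} \<times> Pow {..<N}"
  using relabel_range unfolding trace_def by auto

lemma vtype_in_vertex_types: "vtype D De Df b u \<in> vertex_types N"
  using relabel_range trace_bounded unfolding vtype_def vertex_types_def by auto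

lemma shape_bounded: "shape D De Dc Df b \<in> Pow ({..<N} \<times> {..<N}) \<times> UNIV"
  using relabel_range unfolding shape_def by auto

lemma relabel_mem_iff: "u \<in> Df \<Longrightarrow> b u \<in> b ` {w\<in>Df. P w} \<longleftrightarrow> P u"
  using relabel_inj by (auto dest: inj_onD)

lemma edge_iff_edge_rule:
  assumes u: "u \<in> fst D" and w: "w \<in> fst D"
  shows "(u, w) \<in> snd D \<longleftrightarrow>
    edge_rule (shape D De Dc Df b) (vtype D De Df b u) (vtype D De Df b w) (u = w)"
proof -
  consider "u \<in> Df" | "u \<in> De" | "u \<in> Dc" using u cover by blast
  note cases_u = this
  consider "w \<in> Df" | "w \<in> De" | "w \<in> Dc" using w cover by blast
  note cases_w = this
  have in_Df: "vtype D De Df b x = Finite_part (b x)" if "x \<in> Df" for x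
    using that unfolding vtype_def by simp
  have in_De: "vtype D De Df b x = Empty_part (trace D Df b x)" if "x \<in> De" for x
    using that disjoint unfolding vtype_def by auto
  have in_Dc: "vtype D De Df b x = Complete_part (trace D Df b x)" if "x \<in> Dc" for x
    using that disjoint unfolding vtype_def by auto
  show ?thesis
  proof (cases rule: cases_u; cases rule: cases_w)
    assume "u \<in> Df" "w \<in> Df"
    then show ?thesis
      using relabel_inj by (auto simp: in_Df shape_def inj_on_eq_iff)
  next
    assume "u \<in> Df" "w \<in> De"
    then show ?thesis by (simp add: in_Df in_De trace_def relabel_mem_iff)
  next
    assume "u \<in> Df" "w \<in> Dc"
    then show ?thesis by (simp add: in_Df in_Dc trace_def relabel_mem_iff)
  next
    assume "u \<in> De" "w \<in> Df"
    then show ?thesis by (simp add: in_Df in_De trace_def relabel_mem_iff)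
  next
    assume "u \<in> De" "w \<in> De"
    then show ?thesis
      using empty_part loops by (auto simp: in_De shape_def)
  next
    assume "u \<in> De" "w \<in> Dc"
    moreover have "(u, w) \<in> snd D \<longleftrightarrow> (\<exists>x\<in>De. \<exists>z\<in>Dc. (x, z) \<in> snd D)"
      using calculation uniform_out[OF _ \<open>u \<in> De\<close> _ \<open>w \<in> Dc\<close>] by blast
    ultimately show ?thesis by (simp add: in_De in_Dc shape_def)
  next
    assume "u \<in> Dc" "w \<in> Df"
    then show ?thesis by (simp add: in_Df in_Dc trace_def relabel_mem_iff)
  next
    assume "u \<in> Dc" "w \<in> De"
    moreover have "(u, w) \<in> snd D \<longleftrightarrow> (\<exists>x\<in>De. \<exists>z\<in>Dc. (z, x) \<in> snd D)"
      using calculation uniform_in[OF _ \<open>w \<in> De\<close> _ \<open>u \<in> Dc\<close>] by blast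
    ultimately show ?thesis by (simp add: in_De in_Dc shape_def)
  next
    assume "u \<in> Dc" "w \<in> Dc"
    then show ?thesis
      using complete_part by (simp add: in_Dc)
  qed
qed

lemma edges_determined_by_vtype:
  "edges_determined_by D (edge_rule (shape D De Dc Df b)) (vtype D De Df b)"
  unfolding edges_determined_by_def using edge_iff_edge_rule by blast

end

lemma class_T_partition:
  assumes "D \<in> class_T N"
  obtains De Dc Df b where "T_partition N D De Dc Df b"
proof -
  from assms obtain De Dc Df where D: "finite_digraph D" "De \<union> Dc \<union> Df = fst D"
    "De \<inter> Dc = {}" "De \<inter> Df = {}" "Dc \<inter> Df = {}"
    "\<forall>x\<in>De. \<forall>y\<in>De. x \<noteq> y \<longrightarrow> (x, y) \<notin> snd D"
    "(\<forall>x\<in>De. (x, x) \<in> snd D) \<or> (\<forall>x\<in>De. (x, x) \<notin> snd D)"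
    "\<forall>x\<in>Dc. \<forall>y\<in>Dc. (x, y) \<in> snd D" "card Df \<le> N"
    "\<forall>x\<in>De. \<forall>y\<in>De. \<forall>z\<in>Dc. \<forall>t\<in>Dc.
       ((x, z) \<in> snd D \<longleftrightarrow> (y, t) \<in> snd D) \<and> ((z, x) \<in> snd D \<longleftrightarrow> (t, y) \<in> snd D)"
    unfolding class_T_def mem_Collect_eq by (elim conjE exE) blast
  have "finite Df"
    using D(1,2) unfolding finite_digraph_def by (metis finite_Un)
  then obtain b where "bij_betw b Df {0..<card Df}"
    using ex_bij_betw_finite_nat by blast
  then have "inj_on b Df" "b ` Df \<subseteq> {..<N}"
    using D(9) unfolding bij_betw_def by auto
  with D have "T_partition N D De Dc Df b"
    by unfold_locales blast+
  then show ?thesis by (rule that)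
qed

lemma class_T_good_pair:
  fixes g :: "nat \<Rightarrow> dgraph"
  assumes "\<And>n. g n \<in> class_T N"
  shows "\<exists>i j. i < j \<and> strong_hom_img_le (g i) (g j)"
proof -
  have "\<forall>n. \<exists>De Dc Df b. T_partition N (g n) De Dc Df b"
    using class_T_partition assms by metis
  then obtain De Dc Df b where part: "\<And>n. T_partition N (g n) (De n) (Dc n) (Df n) (b n)"
    unfolding choice_iff by blast
  define \<kappa> where "\<kappa> n = vtype (g n) (De n) (Df n) (b n)" for n
  define s where "s n = shape (g n) (De n) (Dc n) (Df n) (b n)" for n
  define fibre where "fibre n k = {u\<in>fst (g n). \<kappa> n u = k}" for n k
  define d where "d n = (s n, {k\<in>vertex_types N. fibre n k = {}})" for n
  have "range d \<subseteq> (Pow ({..<N} \<times> {..<N}) \<times> UNIV) \<times> Pow (vertex_types N)"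
  proof (rule image_subsetI)
    fix n
    show "d n \<in> (Pow ({..<N} \<times> {..<N}) \<times> UNIV) \<times> Pow (vertex_types N)"
      using T_partition.shape_bounded[OF part, of n] unfolding d_def s_def by blast
  qed
  moreover have "finite ((Pow ({..<N} \<times> {..<N}) \<times> UNIV) \<times> Pow (vertex_types N)
      :: (digraph_shape \<times> _) set)"
    using finite_vertex_types by simp
  ultimately have "finite (range d)" by (rule finite_subset)
  then obtain i j where ij: "i < j" "d i = d j"
    and le: "\<forall>k\<in>vertex_types N. card (fibre i k) \<le> card (fibre j k)"
    using ex_good_pair_pointwise_le[OF _ finite_vertex_types, where f = "\<lambda>n k. card (fibre n k)"]
    by blast
  have outside: "fibre n k = {}" if "k \<notin> vertex_types N" for n k
    using T_partition.vtype_in_vertex_types[OF part] that unfolding fibre_def \<kappa>_def by auto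
  have "finite (fst (g n))" for n
    using T_partition.digraph[OF part] unfolding finite_digraph_def by blast
  moreover have "card (fibre i k) \<le> card (fibre j k)" for k
    using le outside by (cases "k \<in> vertex_types N") auto
  moreover have "fibre i k = {} \<Longrightarrow> fibre j k = {}" for k
    using ij(2) outside unfolding d_def by (cases "k \<in> vertex_types N") blast+
  ultimately obtain \<phi> where onto: "\<phi> ` fst (g j) = fst (g i)"
    and label: "\<And>x. x \<in> fst (g j) \<Longrightarrow> \<kappa> i (\<phi> x) = \<kappa> j x"
    using ex_label_preserving_surj[of "fst (g j)" "fst (g i)" "\<kappa> i" "\<kappa> j"]
    unfolding fibre_def by blast
  have "s i = s j" using ij(2) unfolding d_def by simp
  have "strong_hom_img_le (g i) (g j)"
  proof (rule strong_hom_img_le_if_label_preserving[where \<kappa>A = "\<kappa> i" and \<kappa>B = "\<kappa> j"])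
    show "finite_digraph (g i)" "finite_digraph (g j)"
      by (rule T_partition.digraph[OF part])+
    show "edges_determined_by (g i) (edge_rule (s i)) (\<kappa> i)"
      unfolding s_def \<kappa>_def by (rule T_partition.edges_determined_by_vtype[OF part])
    show "edges_determined_by (g j) (edge_rule (s i)) (\<kappa> j)"
      using T_partition.edges_determined_by_vtype[OF part, of j] \<open>s i = s j\<close>
      unfolding s_def \<kappa>_def by simp
  qed (use edge_rule_mono onto label in auto)
  then show ?thesis using ij(1) by blast
qed

lemma wqo_class_T_if_between_strong_and_hom:
  assumes strong_le: "\<And>A B. strong_hom_img_le A B \<Longrightarrow> le A B"
    and le_hom: "\<And>A B. le A B \<Longrightarrow> hom_img_le A B"
  shows "wqo_class (class_T N) le"
  unfolding wqo_class_def
proof (intro conjI notI; elim exE conjE)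
  fix f :: "nat \<Rightarrow> dgraph"
  assume members: "\<forall>n. f n \<in> class_T N"
    and descent: "\<forall>n. le (f (Suc n)) (f n) \<and> \<not> le (f n) (f (Suc n))"
  have "finite_digraph (f n)" for n
    using members unfolding class_T_def by blast
  moreover have "hom_img_le (f (Suc n)) (f n) \<and> \<not> strong_hom_img_le (f n) (f (Suc n))" for n
    using descent strong_le le_hom by blast
  ultimately show False by (rule no_infinite_strict_epi_chain)
next
  fix f :: "nat \<Rightarrow> dgraph"
  assume "\<forall>n. f n \<in> class_T N" and antichain: "\<forall>i j. i \<noteq> j \<longrightarrow> \<not> le (f i) (f j)"
  then obtain i j where "i < j" "strong_hom_img_le (f i) (f j)"
    using class_T_good_pair[of f N] by blast
  then have "le (f i) (f j)" "i \<noteq> j" using strong_le by simp_all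
  then show False using antichain by blast
qed

theorem theorem2p6:
  fixes N :: nat
  shows "wqo_class (class_T N) hom_img_le \<and> wqo_class (class_T N) strong_hom_img_le"
  using wqo_class_T_if_between_strong_and_hom strong_hom_img_le_imp_hom_img_le by blast

end
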